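(* Let $M=M(S^2;\frac{q_1}{p_1},\frac{q_2}{p_2},\frac{q_3}{p_3})$ with $e(M)\neq0$, and suppose at most one of $p_1,p_2,p_3$ is even. Then $x_M=0$ if and only if $p_1,p_2,p_3$ are weakly coprime.
   Context: $M(S^2;\frac{q_1}{p_1},\frac{q_2}{p_2},\frac{q_3}{p_3})$ ($(p_i,q_i)$ coprime, $p_i\ge1$) is the closed Seifert manifold obtained from $S_{0,3}\times S^1$ by gluing solid tori whose meridians are $p_ic_i+q_ih_i$; $e(M)=\sum_iq_i/p_i$; $\pi_1(M)=\langle c_1,c_2,c_3,h\mid [c_i,h]=1=c_i^{p_i}h^{q_i},\ c_1c_2c_3=1\rangle$. Weakly coprime: one of $p_1,p_2,p_3$ is coprime with each of the other two. An abelian character is the trace of a diagonal representation $\pi_1(M)\to\mathrm{SL}_2(\mathbb{C})$; it is exceptional if it is the trace of a representation $\rho$ with $\rho(h)=\pm I$ and $\rho(c_i)\neq\pm I$ for $i=1,2,3$; $x_M$ is the number of exceptional abelian characters. *)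

theory Defs
  imports "HOL-Analysis.Analysis"
begin

type_synonym cmat = "complex^2^2"

definition SL2 :: "cmat set" where
  "SL2 = {A. det A = 1}"

fun mpow :: "cmat \<Rightarrow> nat \<Rightarrow> cmat" where
  "mpow A 0 = mat 1"
| "mpow A (Suc n) = A ** mpow A n"

definition mzpow :: "cmat \<Rightarrow> int \<Rightarrow> cmat" where
  "mzpow A k = (if 0 \<le> k then mpow A (nat k) else mpow (matrix_inv A) (nat (- k)))"

text \<open>Generators of pi_1(M): c_1, c_2, c_3 (written C 1, C 2, C 3) and h (written H).\<close>
datatype gen = C nat | H

definition valid_gen :: "gen \<Rightarrow> bool" where
  "valid_gen g = (g = H \<or> (\<exists>i\<in>{1,2,3}. g = C i))"

text \<open>Words in the generators and their inverses (flag True = inverse letter);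
  elements of pi_1(M) are represented by such words.\<close>
definition words :: "(gen \<times> bool) list set" where
  "words = {w. \<forall>(g,b)\<in>set w. valid_gen g}"

definition letter_val :: "(gen \<Rightarrow> cmat) \<Rightarrow> gen \<times> bool \<Rightarrow> cmat" where
  "letter_val \<rho> l = (if snd l then matrix_inv (\<rho> (fst l)) else \<rho> (fst l))"

definition word_val :: "(gen \<Rightarrow> cmat) \<Rightarrow> (gen \<times> bool) list \<Rightarrow> cmat" where
  "word_val \<rho> w = foldr (\<lambda>l acc. letter_val \<rho> l ** acc) w (mat 1)"

text \<open>A representation pi_1(M) -> SL_2(C), M = M(S^2; q1/p1, q2/p2, q3/p3), given by
  the images of the generators, subject to the defining relations
  [c_i,h] = 1, c_i^{p_i} h^{q_i} = 1, c_1 c_2 c_3 = 1.\<close>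
definition is_rep :: "(nat \<Rightarrow> int) \<Rightarrow> (nat \<Rightarrow> int) \<Rightarrow> (gen \<Rightarrow> cmat) \<Rightarrow> bool" where
  "is_rep p q \<rho> \<longleftrightarrow>
     \<rho> H \<in> SL2 \<and> (\<forall>i\<in>{1,2,3}. \<rho> (C i) \<in> SL2) \<and>
     (\<forall>i\<in>{1,2,3}. \<rho> (C i) ** \<rho> H = \<rho> H ** \<rho> (C i)) \<and>
     (\<forall>i\<in>{1,2,3}. mzpow (\<rho> (C i)) (p i) ** mzpow (\<rho> H) (q i) = mat 1) \<and>
     \<rho> (C 1) ** \<rho> (C 2) ** \<rho> (C 3) = mat 1"

definition diag_mat :: "cmat \<Rightarrow> bool" where
  "diag_mat A \<longleftrightarrow> A $ 1 $ 2 = 0 \<and> A $ 2 $ 1 = 0"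

definition diagonal_rep :: "(nat \<Rightarrow> int) \<Rightarrow> (nat \<Rightarrow> int) \<Rightarrow> (gen \<Rightarrow> cmat) \<Rightarrow> bool" where
  "diagonal_rep p q \<rho> \<longleftrightarrow> is_rep p q \<rho> \<and> diag_mat (\<rho> H) \<and> (\<forall>i\<in>{1,2,3}. diag_mat (\<rho> (C i)))"

definition character :: "(gen \<Rightarrow> cmat) \<Rightarrow> (gen \<times> bool) list \<Rightarrow> complex" where
  "character \<rho> = (\<lambda>w. if w \<in> words then trace (word_val \<rho> w) else 0)"

definition abelian_chars :: "(nat \<Rightarrow> int) \<Rightarrow> (nat \<Rightarrow> int) \<Rightarrow> ((gen \<times> bool) list \<Rightarrow> complex) set" where
  "abelian_chars p q = {character \<rho> | \<rho>. diagonal_rep p q \<rho>}"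

definition exceptional_abelian_chars ::
  "(nat \<Rightarrow> int) \<Rightarrow> (nat \<Rightarrow> int) \<Rightarrow> ((gen \<times> bool) list \<Rightarrow> complex) set" where
  "exceptional_abelian_chars p q =
     {chr \<in> abelian_chars p q. \<exists>\<rho>. is_rep p q \<rho> \<and> character \<rho> = chr \<and>
        (\<rho> H = mat 1 \<or> \<rho> H = - mat 1) \<and>
        (\<forall>i\<in>{1,2,3}. \<rho> (C i) \<noteq> mat 1 \<and> \<rho> (C i) \<noteq> - mat 1)}"

definition x_M :: "(nat \<Rightarrow> int) \<Rightarrow> (nat \<Rightarrow> int) \<Rightarrow> nat" where
  "x_M p q = card (exceptional_abelian_chars p q)"

definition euler_number :: "(nat \<Rightarrow> int) \<Rightarrow> (nat \<Rightarrow> int) \<Rightarrow> real" where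
  "euler_number p q = (\<Sum>i\<in>{1,2,3::nat}. of_int (q i) / of_int (p i))"

definition weakly_coprime :: "(nat \<Rightarrow> int) \<Rightarrow> bool" where
  "weakly_coprime p \<longleftrightarrow> (\<exists>i\<in>{1,2,3}. \<forall>j\<in>{1,2,3}. j \<noteq> i \<longrightarrow> coprime (p i) (p j))"

end

theory Submission
  imports Defs "HOL-Library.Real_Mod"
begin

text \<open>
  An exceptional character is shared by a diagonal representation sigma and a representation
  rho with rho(h) = +-I and no rho(c_i) = +-I. Comparing traces gives sigma(h) = rho(h) = e I
  with e = +-1, hence sigma(c_i) = diag(x_i, 1/x_i) with x_i^(2 p_i) = 1 and x_1 x_2 x_3 = 1.
  In particular there are only finitely many exceptional characters, so x_M = 0 means that
  there are none.

  If p_c is coprime to the other two p_j, then x_c^2 is a root of unity whose order divides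
  both p_c and p_j p_k, so x_c = +-1 and tr rho(c_c) = +-2. Since rho(c_c)^(p_c) = e^(-q_c) I is
  scalar, this forces rho(c_c) = +-I: there is no exceptional character.

  Otherwise some p_c shares factors r, s >= 3 with p_j and p_k, both odd by the parity
  hypothesis, and h -> I, c_j -> diag(z_r, 1/z_r), c_k -> diag(z_s, 1/z_s) with primitive
  roots of unity z_r, z_s is an exceptional diagonal representation: the angle 1/r + 1/s
  of c_c is not a half-integer because r and s are odd.
\<close>

section \<open>Complex 2x2 matrices\<close>

definition mat2 :: "complex \<Rightarrow> complex \<Rightarrow> complex \<Rightarrow> complex \<Rightarrow> cmat" where
  "mat2 a b c d = (\<chi> i j. if i = 1 then (if j = 1 then a else b) else (if j = 1 then c else d))"

lemma mat2_nth [simp]: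
  "mat2 a b c d $ 1 $ 1 = a" "mat2 a b c d $ 1 $ 2 = b"
  "mat2 a b c d $ 2 $ 1 = c" "mat2 a b c d $ 2 $ 2 = d"
  by (simp_all add: mat2_def)

lemma mat2_cases:
  obtains a b c d where "A = mat2 a b c d"
proof
  show "A = mat2 (A$1$1) (A$1$2) (A$2$1) (A$2$2)"
    by (simp add: vec_eq_iff forall_2)
qed

lemma mat2_eq_iff [simp]:
  "mat2 a b c d = mat2 a' b' c' d' \<longleftrightarrow> a = a' \<and> b = b' \<and> c = c' \<and> d = d'"
  by (metis mat2_nth)

lemma mat2_mult [simp]:
  "mat2 a b c d ** mat2 a' b' c' d' =
     mat2 (a*a' + b*c') (a*b' + b*d') (c*a' + d*c') (c*b' + d*d')"
  by (simp add: vec_eq_iff forall_2 matrix_matrix_mult_def sum_2)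

lemma mat_eq_mat2: "mat k = mat2 k 0 0 k"
  by (simp add: vec_eq_iff forall_2 mat_def)

lemma uminus_mat: "- mat k = (mat (- k) :: 'a::ring_1^'n^'n)"
  by (simp add: vec_eq_iff mat_def)

lemma det_mat2 [simp]: "det (mat2 a b c d) = a*d - b*c"
  by (simp add: det_2)

lemma trace_mat2 [simp]: "trace (mat2 a b c d) = a + d"
  by (simp add: trace_def sum_2)

lemma diag_mat_mat2 [simp]: "diag_mat (mat2 a b c d) \<longleftrightarrow> b = 0 \<and> c = 0"
  by (simp add: diag_mat_def)

lemma diag_matE:
  assumes "diag_mat A"
  obtains a d where "A = mat2 a 0 0 d"
  by (metis assms diag_mat_mat2 mat2_cases)

lemma matrix_inv_eqI:
  fixes A :: "'a::semiring_1^'n^'n"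
  assumes "A ** B = mat 1" "B ** A = mat 1"
  shows "matrix_inv A = B"
proof -
  let ?A' = "matrix_inv A"
  have "A ** ?A' = mat 1 \<and> ?A' ** A = mat 1"
    unfolding matrix_inv_def by (rule someI[of _ B]) (use assms in auto)
  then have "?A' = ?A' ** (A ** B)" "?A' ** A = mat 1"
    using assms by (auto simp: matrix_mul_rid)
  then show ?thesis by (simp add: matrix_mul_assoc matrix_mul_lid)
qed

lemma mpow_mat2_diag: "mpow (mat2 a 0 0 d) n = mat2 (a^n) 0 0 (d^n)"
  by (induction n) (simp_all add: mat_eq_mat2)

lemma mzpow_mat2_diag:
  assumes "a \<noteq> 0" "d \<noteq> 0"
  shows "mzpow (mat2 a 0 0 d) k = mat2 (a powi k) 0 0 (d powi k)"
proof -
  have "matrix_inv (mat2 a 0 0 d) = mat2 (inverse a) 0 0 (inverse d)"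
    by (rule matrix_inv_eqI) (simp_all add: assms mat_eq_mat2)
  then show ?thesis
    by (simp add: mzpow_def mpow_mat2_diag power_int_def power_inverse)
qed

lemma mzpow_mat: "e \<noteq> 0 \<Longrightarrow> mzpow (mat e) k = mat (e powi k)"
  by (simp add: mat_eq_mat2 mzpow_mat2_diag)

lemma mpow_Suc_double_eigenvalue:
  assumes "a*d - b*c = e^2" "a + d = 2*e"
  shows "mpow (mat2 a b c d) (Suc n) =
    mat2 (e^Suc n + of_nat (Suc n) * e^n * (a - e)) (of_nat (Suc n) * e^n * b)
         (of_nat (Suc n) * e^n * c) (e^Suc n + of_nat (Suc n) * e^n * (d - e))"
proof (induction n)
  case 0
  show ?case by (simp add: mat_eq_mat2)
next
  case (Suc n)
  define x where "x = e^n"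
  define m where "m = (of_nat n :: complex)"
  have pow: "e^Suc n = e*x" "e^Suc (Suc n) = e*e*x" by (simp_all add: x_def)
  have nat: "of_nat (Suc n) = m + 1" "of_nat (Suc (Suc n)) = m + 2" by (simp_all add: m_def)
  show ?case
    unfolding mpow.simps(2)[of _ "Suc n"] Suc.IH pow nat x_def[symmetric] mat2_mult mat2_eq_iff
    using assms by algebra
qed

text \<open>A matrix with double eigenvalue e is e I + N with N^2 = 0 (Cayley-Hamilton), so its
  n-th power is e^n I + n e^(n-1) N; if that is diagonal and e is nonzero, then N = 0.\<close>
lemma double_eigenvalue_scalar_if_power_diag:
  assumes "det A = e^2" "trace A = 2*e" "e \<noteq> 0" "n \<ge> 1" "diag_mat (mpow A n)"
  shows "A = mat e"
proof -
  obtain a b c d where A: "A = mat2 a b c d" by (rule mat2_cases)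
  obtain m where n: "n = Suc m" using \<open>n \<ge> 1\<close> by (cases n) auto
  have h: "a*d - b*c = e^2" "a + d = 2*e" using assms(1,2) by (simp_all add: A)
  have "(of_nat n * e^m) * b = 0" "(of_nat n * e^m) * c = 0"
    using assms(5) unfolding A n mpow_Suc_double_eigenvalue[OF h] by simp_all
  moreover have "of_nat n * e^m \<noteq> 0" using assms(3,4) by simp
  ultimately have "b = 0" "c = 0" using assms(3) by simp_all
  with h have "(a - e)^2 = 0" by algebra
  with h \<open>b = 0\<close> \<open>c = 0\<close> show ?thesis by (simp add: A mat_eq_mat2)
qed

section \<open>Roots of unity and arithmetic of the indices\<close>

lemma power_int_eq_1_if_coprime:
  fixes z :: "'a :: field"
  assumes "z powi m = 1" "z powi n = 1" "coprime m n"
  shows "z = 1"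
proof -
  have "z \<noteq> 0"
  proof
    assume "z = 0"
    then have "m = 0" "n = 0" using assms(1,2) by (auto simp: power_int_0_left_if split: if_splits)
    then show False using assms(3) by simp
  qed
  obtain u v where uv: "u * m + v * n = 1"
    using bezout_int[of m n] assms(3) by (auto simp: coprime_iff_gcd_eq_1)
  have "z = z powi (m * u + n * v)" using uv by (simp add: ac_simps)
  also have "\<dots> = (z powi m) powi u * (z powi n) powi v"
    using \<open>z \<noteq> 0\<close> by (simp add: power_int_add power_int_mult)
  finally show ?thesis using assms(1,2) by simp
qed

lemma power_int_mult_eq_1:
  fixes x y :: "'a :: field"
  assumes "x powi m = 1" "y powi n = 1"
  shows "(x * y) powi (m * n) = 1"
proof -
  have "(x * y) powi (m * n) = (x powi m) powi n * (y powi n) powi m"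
    by (simp add: power_int_mult_distrib power_int_mult[symmetric] mult.commute)
  then show ?thesis using assms by simp
qed

lemma cis_2pi_eq_1_iff: "cis (2 * pi * t) = 1 \<longleftrightarrow> t \<in> \<int>"
proof
  assume "cis (2 * pi * t) = 1"
  then obtain n :: int where "2 * pi * t = of_int n * (2 * pi)" by (auto simp: cis_eq_1_iff)
  then show "t \<in> \<int>" by simp
qed (auto elim: Ints_cases)

lemma cis_2pi_eq_pm1_imp_double_in_Ints: "cis (2 * pi * t) = 1 \<or> cis (2 * pi * t) = -1 \<Longrightarrow> 2 * t \<in> \<int>"
proof -
  assume pm1: "cis (2 * pi * t) = 1 \<or> cis (2 * pi * t) = -1"
  have "cis (2 * pi * (2 * t)) = cis (2 * pi * t + 2 * pi * t)"
    by (rule arg_cong[where f = cis]) simp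
  also have "\<dots> = cis (2 * pi * t) ^ 2" by (simp only: power2_eq_square cis_mult)
  also have "\<dots> = 1" using pm1 by auto
  finally show "2 * t \<in> \<int>" by (simp only: cis_2pi_eq_1_iff)
qed

lemma odd_gcd_ge_3:
  fixes a b :: int
  assumes "a \<noteq> 0" "\<not> coprime a b" "odd a \<or> odd b"
  shows "odd (gcd a b) \<and> 3 \<le> gcd a b"
proof -
  have "odd (gcd a b)" using assms(3) by (meson dvd_trans gcd_dvd1 gcd_dvd2)
  moreover have "gcd a b \<noteq> 1" "0 < gcd a b" using assms(1,2) by (auto simp: coprime_iff_gcd_eq_1)
  ultimately show ?thesis by presburger
qed

lemma two_div_not_Ints:
  assumes "(r::int) \<ge> 3"
  shows "2 / of_int r \<notin> (\<int> :: real set)"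
proof
  assume "2 / of_int r \<in> (\<int> :: real set)"
  then obtain n :: int where n: "2 / of_int r = (of_int n :: real)" by (auto elim: Ints_cases)
  have "0 < 2 / (of_int r :: real)" "2 / (of_int r :: real) < 1"
    using assms by (simp_all add: field_simps)
  with n show False by simp
qed

lemma two_div_add_two_div_not_Ints:
  fixes r s :: int
  assumes "odd r" "odd s" "r \<ge> 3" "s \<ge> 3"
  shows "2 / of_int r + 2 / of_int s \<notin> (\<int> :: real set)"
proof
  assume "2 / of_int r + 2 / of_int s \<in> (\<int> :: real set)"
  then obtain n :: int where n: "2 / of_int r + 2 / of_int s = (of_int n :: real)"
    by (auto elim: Ints_cases)
  have "2 / of_int r \<le> (2/3 :: real)" "2 / of_int s \<le> (2/3 :: real)"
    "0 < 2 / (of_int r :: real)" "0 < 2 / (of_int s :: real)"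
    using assms(3,4) by (simp_all add: field_simps)
  then have "n = 1" using n by linarith
  with n have "2 * of_int s + 2 * of_int r = (of_int (r * s) :: real)"
    using assms(3,4) by (simp add: field_simps)
  then have "of_int (2 * (s + r)) = (of_int (r * s) :: real)" by simp
  then have "2 * (s + r) = r * s" by (simp only: of_int_eq_iff)
  then have "even (r * s)" by (metis dvd_triv_left)
  with assms(1,2) show False by simp
qed

lemma distinct_if_insert3_eq_123:
  assumes "{c, j, k} = {1, 2, 3 :: nat}"
  shows "c \<noteq> j" "c \<noteq> k" "j \<noteq> k"
proof -
  have "card {c, j, k} = 3" using assms by simp
  then show "c \<noteq> j" "c \<noteq> k" "j \<noteq> k" by (auto simp: card_insert_if split: if_splits)
qed

lemma other_two_indices:
  assumes "c \<in> {1, 2, 3 :: nat}"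
  obtains j k where "{c, j, k} = {1, 2, 3 :: nat}"
proof -
  have "{c, if c = 1 then 2 else 1, if c = 3 then 2 else 3} = {1, 2, 3 :: nat}"
    using assms by auto
  with that show ?thesis by blast
qed

text \<open>Non-coprimality is a symmetric relation on three indices without isolated vertices, so
  some index is related to both others.\<close>
lemma not_weakly_coprimeE:
  assumes "\<not> weakly_coprime p"
  obtains c j k where "{c, j, k} = {1, 2, 3 :: nat}" "\<not> coprime (p c) (p j)" "\<not> coprime (p c) (p k)"
proof -
  define N where "N a b \<longleftrightarrow> \<not> coprime (p a) (p b)" for a b
  have N_commute: "N a b = N b a" for a b by (simp add: N_def coprime_commute)
  have "\<forall>i\<in>{1, 2, 3}. \<exists>j\<in>{1, 2, 3}. j \<noteq> i \<and> N i j"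
    using assms unfolding weakly_coprime_def N_def by blast
  then have "N 1 2 \<or> N 1 3" "N 2 1 \<or> N 2 3" "N 3 1 \<or> N 3 2" by auto
  then have "(N 1 2 \<and> N 1 3) \<or> (N 2 1 \<and> N 2 3) \<or> (N 3 1 \<and> N 3 2)"
    using N_commute[of 1 2] N_commute[of 1 3] N_commute[of 2 3] by blast
  then show ?thesis
  proof (elim disjE conjE)
    assume "N 1 2" "N 1 3"
    then show ?thesis using that[of 1 2 3] by (simp add: N_def)
  next
    assume "N 2 1" "N 2 3"
    then show ?thesis using that[of 2 1 3] by (simp add: N_def insert_commute)
  next
    assume "N 3 1" "N 3 2"
    then show ?thesis using that[of 3 1 2] by (simp add: N_def insert_commute)
  qed
qed

lemma odd_if_card_even_le_1:
  assumes "card {i \<in> {1, 2, 3 :: nat}. even (p i)} \<le> 1"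
    and "a \<in> {1, 2, 3}" "b \<in> {1, 2, 3}" "a \<noteq> b"
  shows "odd (p a) \<or> odd (p b)"
proof (rule ccontr)
  assume "\<not> (odd (p a) \<or> odd (p b))"
  then have "{a, b} \<subseteq> {i \<in> {1, 2, 3 :: nat}. even (p i)}" using assms(2,3) by auto
  then have "card {a, b} \<le> card {i \<in> {1, 2, 3 :: nat}. even (p i)}" by (intro card_mono) auto
  with assms(1,4) show False by simp
qed

section \<open>Characters and representations\<close>

lemma valid_gen_iff: "valid_gen g \<longleftrightarrow> g \<in> {H, C 1, C 2, C 3}"
  by (auto simp: valid_gen_def)

lemma valid_gen_H [simp]: "valid_gen H"
  and valid_gen_C [simp]: "i \<in> {1, 2, 3} \<Longrightarrow> valid_gen (C i)"
  by (auto simp: valid_gen_def)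

lemma word_val_cong:
  assumes "\<forall>(g, b)\<in>set w. valid_gen g" "\<And>g. valid_gen g \<Longrightarrow> \<rho> g = \<sigma> g"
  shows "word_val \<rho> w = word_val \<sigma> w"
  using assms by (induction w) (auto simp: word_val_def letter_val_def)

lemma character_cong:
  assumes "\<And>g. valid_gen g \<Longrightarrow> \<rho> g = \<sigma> g"
  shows "character \<rho> = character \<sigma>"
  using assms
  by (auto simp: character_def words_def intro!: ext arg_cong[where f = trace] word_val_cong)

lemma character_generator: "valid_gen g \<Longrightarrow> character \<rho> [(g, False)] = trace (\<rho> g)"
  by (simp add: character_def words_def word_val_def letter_val_def matrix_mul_rid)

lemma trace_eq_if_character_eq:
  "character \<rho> = character \<sigma> \<Longrightarrow> valid_gen g \<Longrightarrow> trace (\<rho> g) = trace (\<sigma> g)"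
  by (metis character_generator)

lemma is_rep_det: "is_rep p q \<rho> \<Longrightarrow> valid_gen g \<Longrightarrow> det (\<rho> g) = 1"
  by (auto simp: is_rep_def SL2_def valid_gen_def)

lemma is_rep_relation:
  "is_rep p q \<rho> \<Longrightarrow> i \<in> {1, 2, 3} \<Longrightarrow> mzpow (\<rho> (C i)) (p i) ** mzpow (\<rho> H) (q i) = mat 1"
  unfolding is_rep_def by blast

lemma is_rep_product: "is_rep p q \<rho> \<Longrightarrow> \<rho> (C 1) ** \<rho> (C 2) ** \<rho> (C 3) = mat 1"
  by (simp add: is_rep_def)

section \<open>Exceptional abelian characters\<close>

lemma exceptional_abelian_charsE:
  assumes "chr \<in> exceptional_abelian_chars p q"
  obtains \<rho> \<sigma> e where "is_rep p q \<rho>" "diagonal_rep p q \<sigma>" "chr = character \<sigma>"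
    "character \<rho> = character \<sigma>" "e^2 = 1" "\<rho> H = mat e" "\<sigma> H = mat e"
    "\<forall>i\<in>{1, 2, 3}. \<rho> (C i) \<noteq> mat 1 \<and> \<rho> (C i) \<noteq> mat (-1)"
proof -
  from assms obtain \<sigma> \<rho> where \<sigma>: "diagonal_rep p q \<sigma>" "chr = character \<sigma>"
    and \<rho>: "is_rep p q \<rho>" "character \<rho> = chr" "\<rho> H = mat 1 \<or> \<rho> H = - mat 1"
      "\<forall>i\<in>{1, 2, 3}. \<rho> (C i) \<noteq> mat 1 \<and> \<rho> (C i) \<noteq> - mat 1"
    unfolding exceptional_abelian_chars_def abelian_chars_def by blast
  obtain e where e: "e^2 = 1" "\<rho> H = mat e"
    using \<rho>(3) uminus_mat by (metis power2_minus power_one)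
  have "det (\<sigma> H) = e^2" using is_rep_det[of p q \<sigma> H] \<sigma>(1) e(1)
    by (simp add: diagonal_rep_def)
  moreover have "trace (\<sigma> H) = 2 * e"
    using trace_eq_if_character_eq[of \<rho> \<sigma> H] \<rho>(2) \<sigma>(2) e(2) by (simp add: mat_eq_mat2)
  moreover have "diag_mat (mpow (\<sigma> H) 1)" using \<sigma>(1) by (simp add: diagonal_rep_def matrix_mul_rid)
  moreover have "e \<noteq> 0" using e(1) by auto
  ultimately have "\<sigma> H = mat e" by (intro double_eigenvalue_scalar_if_power_diag) auto
  with that \<rho> \<sigma> e show ?thesis by (simp add: uminus_mat)
qed

lemma diagonal_rep_generator:
  assumes "diagonal_rep p q \<sigma>" "\<sigma> H = mat e" "e^2 = 1" "i \<in> {1, 2, 3}"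
  obtains x where "\<sigma> (C i) = mat2 x 0 0 (inverse x)" "x \<noteq> 0" "(x^2) powi p i = 1"
proof -
  have rep: "is_rep p q \<sigma>" using assms(1) by (simp add: diagonal_rep_def)
  have "diag_mat (\<sigma> (C i))" using assms(1,4) unfolding diagonal_rep_def by blast
  then obtain x y where xy: "\<sigma> (C i) = mat2 x 0 0 y" by (rule diag_matE)
  have "x * y = 1" using is_rep_det[OF rep, of "C i"] assms(4) xy by simp
  then have x: "x \<noteq> 0" "y = inverse x" by (auto dest: inverse_unique)
  have "e \<noteq> 0" using assms(3) by auto
  have "x powi p i * e powi q i = 1"
    using is_rep_relation[OF rep assms(4)] x
    unfolding xy assms(2) mzpow_mat[OF \<open>e \<noteq> 0\<close>] by (simp add: mzpow_mat2_diag mat_eq_mat2)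
  then have "(x powi p i)^2 * (e powi q i)^2 = 1" by (metis power_mult_distrib power_one)
  moreover have "(z powi k)^2 = (z^2) powi k" for z :: complex and k
    by (simp add: power_int_power power_int_power' mult.commute)
  ultimately have "(x^2) powi p i = 1" using assms(3) by simp
  with that xy x show ?thesis by blast
qed

lemma rep_generator_scalar_if_trace:
  assumes rep: "is_rep p q \<rho>" and "\<rho> H = mat e" "e^2 = 1" "i \<in> {1, 2, 3}" "p i \<ge> 1"
    and "trace (\<rho> (C i)) = 2 * x" "x^2 = 1"
  shows "\<rho> (C i) = mat x"
proof -
  have "e \<noteq> 0" using assms(3) by auto
  obtain a b c d where A: "mpow (\<rho> (C i)) (nat (p i)) = mat2 a b c d" by (rule mat2_cases)
  have "mpow (\<rho> (C i)) (nat (p i)) ** mat (e powi q i) = mat 1"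
    using is_rep_relation[OF rep assms(4)] assms(5)
    unfolding assms(2) mzpow_mat[OF \<open>e \<noteq> 0\<close>] by (simp add: mzpow_def)
  then have "b * e powi q i = 0" "c * e powi q i = 0" by (simp_all add: A mat_eq_mat2)
  then have "diag_mat (mpow (\<rho> (C i)) (nat (p i)))" using \<open>e \<noteq> 0\<close> by (simp add: A)
  moreover have "det (\<rho> (C i)) = x^2" using is_rep_det[OF rep, of "C i"] assms(4,7) by simp
  moreover have "x \<noteq> 0" "nat (p i) \<ge> 1" using assms(5,7) by auto
  ultimately show ?thesis using assms(6) by (intro double_eigenvalue_scalar_if_power_diag) auto
qed

lemma diagonal_rep_generator_scalar_if_coprime:
  assumes \<sigma>: "diagonal_rep p q \<sigma>" "\<sigma> H = mat e" "e^2 = 1"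
    and c: "c \<in> {1, 2, 3}" and cop: "\<forall>j\<in>{1, 2, 3}. j \<noteq> c \<longrightarrow> coprime (p c) (p j)"
  obtains x where "\<sigma> (C c) = mat x" "x^2 = 1"
proof -
  have "\<forall>i\<in>{1, 2, 3}. \<exists>x. \<sigma> (C i) = mat2 x 0 0 (inverse x) \<and> x \<noteq> 0 \<and> (x^2) powi p i = 1"
    using diagonal_rep_generator[OF \<sigma>] by metis
  then obtain x where x: "\<And>i. i \<in> {1, 2, 3} \<Longrightarrow>
      \<sigma> (C i) = mat2 (x i) 0 0 (inverse (x i)) \<and> x i \<noteq> 0 \<and> (x i ^ 2) powi p i = 1"
    by metis
  obtain j k where idx: "{c, j, k} = {1, 2, 3 :: nat}" using c by (rule other_two_indices)
  note dist = distinct_if_insert3_eq_123[OF idx]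
  have jk: "j \<in> {1, 2, 3}" "k \<in> {1, 2, 3}" using idx by blast+
  have "x 1 * x 2 * x 3 = 1"
    using is_rep_product[of p q \<sigma>] \<sigma>(1) x[of 1] x[of 2] x[of 3]
    by (simp add: diagonal_rep_def mat_eq_mat2)
  then have "(\<Prod>i\<in>{c, j, k}. x i) = 1" unfolding idx by (simp add: mult.assoc)
  then have "(x c * (x j * x k))^2 = 1" using dist by simp
  then have prod: "x c ^ 2 * (x j ^ 2 * x k ^ 2) = 1" by (simp add: power_mult_distrib)
  have "(x j ^ 2 * x k ^ 2) powi (p j * p k) = 1"
    using x jk by (intro power_int_mult_eq_1) auto
  then have "(x c ^ 2) powi (p j * p k) = 1"
    using prod by (metis power_int_mult_distrib power_int_1_left mult_1_right)
  moreover have "coprime (p c) (p j)" "coprime (p c) (p k)" using cop jk dist by auto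
  then have "coprime (p c) (p j * p k)" by simp
  ultimately have "x c ^ 2 = 1" using power_int_eq_1_if_coprime x[OF c] by blast
  moreover have "\<sigma> (C c) = mat (x c)"
    using x[OF c] \<open>x c ^ 2 = 1\<close> by (auto simp: power2_eq_1_iff mat_eq_mat2)
  ultimately show ?thesis using that by blast
qed

lemma exceptional_abelian_chars_empty_if_weakly_coprime:
  assumes pos: "\<forall>i\<in>{1, 2, 3}. p i \<ge> 1" and "weakly_coprime p"
  shows "exceptional_abelian_chars p q = {}"
proof (rule equals0I)
  fix chr assume "chr \<in> exceptional_abelian_chars p q"
  then obtain \<rho> \<sigma> e where rep: "is_rep p q \<rho>" and \<sigma>: "diagonal_rep p q \<sigma>"
    and "chr = character \<sigma>" and chr: "character \<rho> = character \<sigma>"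
    and e: "e^2 = 1" "\<rho> H = mat e" "\<sigma> H = mat e"
    and exc: "\<forall>i\<in>{1, 2, 3}. \<rho> (C i) \<noteq> mat 1 \<and> \<rho> (C i) \<noteq> mat (-1)"
    by (rule exceptional_abelian_charsE)
  obtain c where c: "c \<in> {1, 2, 3}" and cop: "\<forall>j\<in>{1, 2, 3}. j \<noteq> c \<longrightarrow> coprime (p c) (p j)"
    using \<open>weakly_coprime p\<close> unfolding weakly_coprime_def by blast
  obtain x where \<sigma>c: "\<sigma> (C c) = mat x" "x^2 = 1"
    using \<sigma> e(3,1) c cop by (rule diagonal_rep_generator_scalar_if_coprime)
  have "trace (\<rho> (C c)) = 2 * x"
    using trace_eq_if_character_eq[OF chr, of "C c"] c \<sigma>c(1) by (simp add: mat_eq_mat2)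
  then have "\<rho> (C c) = mat x" using rep_generator_scalar_if_trace[OF rep e(2,1) c] pos c \<sigma>c(2) by auto
  moreover have "x = 1 \<or> x = -1" using \<sigma>c(2) by (simp add: power2_eq_1_iff)
  ultimately show False using exc c by auto
qed

lemma finite_exceptional_abelian_chars:
  assumes pos: "\<forall>i\<in>{1, 2, 3}. p i \<ge> 1"
  shows "finite (exceptional_abelian_chars p q)"
proof -
  define G where "G = {H, C 1, C 2, C 3}"
  define F where "F g = (case g of H \<Rightarrow> {mat 1, mat (-1)}
    | C i \<Rightarrow> (\<lambda>x. mat2 x 0 0 (inverse x)) ` {x. (x^2) powi p i = 1})" for g
  have "finite (F g)" if "g \<in> G" for g
  proof (cases g)
    case (C i)
    with that have i: "i \<in> {1, 2, 3}" by (auto simp: G_def)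
    with pos have "{x :: complex. (x^2) powi p i = 1} = {x. x ^ (2 * nat (p i)) = 1}"
      by (auto simp: power_int_nonneg_exp power_mult)
    moreover have "finite {x :: complex. x ^ (2 * nat (p i)) = 1}"
      using pos i by (intro finite_roots_unity) auto
    ultimately show ?thesis using C by (simp add: F_def)
  qed (simp add: F_def)
  then have "finite (Pi\<^sub>E G F)" by (intro finite_PiE) (auto simp: G_def)
  moreover have "exceptional_abelian_chars p q \<subseteq> character ` Pi\<^sub>E G F"
  proof
    fix chr assume "chr \<in> exceptional_abelian_chars p q"
    then obtain \<sigma> e where \<sigma>: "diagonal_rep p q \<sigma>" "chr = character \<sigma>"
      and e: "e^2 = 1" "\<sigma> H = mat e"
      by (elim exceptional_abelian_charsE) blast
    have "\<sigma> g \<in> F g" if "g \<in> G" for g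
    proof (cases g)
      case (C i)
      with that have i: "i \<in> {1, 2, 3}" by (auto simp: G_def)
      obtain x where "\<sigma> (C i) = mat2 x 0 0 (inverse x)" "x \<noteq> 0" "(x^2) powi p i = 1"
        using \<sigma>(1) e(2,1) i by (rule diagonal_rep_generator)
      then show ?thesis using C by (simp add: F_def)
    next
      case H
      then show ?thesis using e by (auto simp: F_def power2_eq_1_iff)
    qed
    then have "restrict \<sigma> G \<in> Pi\<^sub>E G F" by (simp add: restrict_PiE_iff)
    moreover have "chr = character (restrict \<sigma> G)"
      using \<sigma>(2) by (auto intro: character_cong simp: valid_gen_iff G_def)
    ultimately show "chr \<in> character ` Pi\<^sub>E G F" by blast
  qed
  ultimately show ?thesis by (meson finite_imageI finite_subset)
qed

definition angle_rep :: "(nat \<Rightarrow> real) \<Rightarrow> gen \<Rightarrow> cmat" where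
  "angle_rep t g = (case g of
      H \<Rightarrow> mat 1
    | C i \<Rightarrow> mat2 (cis (2 * pi * t i)) 0 0 (inverse (cis (2 * pi * t i))))"

lemma is_rep_angle_rep:
  fixes t :: "nat \<Rightarrow> real"
  assumes sum: "t 1 + t 2 + t 3 = 0"
    and order: "\<And>i. i \<in> {1, 2, 3} \<Longrightarrow> of_int (p i) * t i \<in> \<int>"
  shows "is_rep p q (angle_rep t)"
proof -
  define z where "z i = cis (2 * pi * t i)" for i
  have H: "angle_rep t H = mat 1" and C: "angle_rep t (C i) = mat2 (z i) 0 0 (inverse (z i))" for i
    by (simp_all add: angle_rep_def z_def)
  have z0: "z i \<noteq> 0" for i by (simp add: z_def)
  have z_powi: "z i powi p i = 1" if "i \<in> {1, 2, 3}" for i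
  proof -
    have "z i powi p i = cis (2 * pi * (of_int (p i) * t i))"
      by (simp add: z_def cis_power_int ac_simps)
    also have "\<dots> = 1" using order[OF that] by (simp only: cis_2pi_eq_1_iff)
    finally show ?thesis .
  qed
  have "z 1 * z 2 * z 3 = cis (2 * pi * (t 1 + t 2 + t 3))"
    by (simp add: z_def cis_mult distrib_left)
  then have z_prod: "z 1 * z 2 * z 3 = 1" using sum by simp
  show ?thesis
    unfolding is_rep_def
  proof (intro conjI ballI)
    fix i :: nat assume i: "i \<in> {1, 2, 3}"
    show "angle_rep t (C i) \<in> SL2" by (simp add: C SL2_def z0)
    show "angle_rep t (C i) ** angle_rep t H = angle_rep t H ** angle_rep t (C i)"
      by (simp add: H matrix_mul_lid matrix_mul_rid)
    show "mzpow (angle_rep t (C i)) (p i) ** mzpow (angle_rep t H) (q i) = mat 1"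
      using z_powi[OF i] z0 mzpow_mat[of 1]
      by (simp add: C H mzpow_mat2_diag power_int_inverse mat_eq_mat2)
  next
    show "angle_rep t H \<in> SL2" by (simp add: H SL2_def)
    show "angle_rep t (C 1) ** angle_rep t (C 2) ** angle_rep t (C 3) = mat 1"
      using z_prod by (simp add: C mat_eq_mat2 flip: inverse_mult_distrib)
  qed
qed

lemma exceptional_abelian_chars_nonempty_if_angles:
  fixes t :: "nat \<Rightarrow> real"
  assumes sum: "t 1 + t 2 + t 3 = 0"
    and order: "\<And>i. i \<in> {1, 2, 3} \<Longrightarrow> of_int (p i) * t i \<in> \<int>"
    and nonscalar: "\<And>i. i \<in> {1, 2, 3} \<Longrightarrow> 2 * t i \<notin> \<int>"
  shows "exceptional_abelian_chars p q \<noteq> {}"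
proof -
  have rep: "is_rep p q (angle_rep t)" using sum order by (rule is_rep_angle_rep)
  then have "diagonal_rep p q (angle_rep t)"
    by (simp add: diagonal_rep_def angle_rep_def mat_eq_mat2)
  moreover have "angle_rep t (C i) \<noteq> mat 1 \<and> angle_rep t (C i) \<noteq> mat (-1)"
    if "i \<in> {1, 2, 3}" for i
    using cis_2pi_eq_pm1_imp_double_in_Ints[of "t i"] nonscalar[OF that]
    by (auto simp: angle_rep_def mat_eq_mat2)
  ultimately have "character (angle_rep t) \<in> exceptional_abelian_chars p q"
    unfolding exceptional_abelian_chars_def abelian_chars_def uminus_mat
    using rep by (auto simp: angle_rep_def)
  then show ?thesis by blast
qed

lemma exceptional_abelian_chars_nonempty_if_not_coprime:
  assumes pos: "\<forall>i\<in>{1, 2, 3}. p i \<ge> 1" and idx: "{c, j, k} = {1, 2, 3 :: nat}"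
    and ncop: "\<not> coprime (p c) (p j)" "\<not> coprime (p c) (p k)"
    and odd: "odd (p c) \<or> odd (p j)" "odd (p c) \<or> odd (p k)"
  shows "exceptional_abelian_chars p q \<noteq> {}"
proof -
  note dist = distinct_if_insert3_eq_123[OF idx]
  have c: "c \<in> {1, 2, 3}" using idx by blast
  define r where "r = gcd (p c) (p j)"
  define s where "s = gcd (p c) (p k)"
  have r: "odd r" "3 \<le> r" unfolding r_def using pos c ncop(1) odd(1) odd_gcd_ge_3 by auto
  have s: "odd s" "3 \<le> s" unfolding s_def using pos c ncop(2) odd(2) odd_gcd_ge_3 by auto
  have r_dvd: "r dvd p c" "r dvd p j" and s_dvd: "s dvd p c" "s dvd p k"
    by (simp_all add: r_def s_def)
  define t :: "nat \<Rightarrow> real" where "t i = (if i = j then 1 / of_int r else if i = k then 1 / of_int s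
    else - (1 / of_int r + 1 / of_int s))" for i
  have t: "t j = 1 / of_int r" "t k = 1 / of_int s" "t c = - (1 / of_int r + 1 / of_int s)"
    using dist by (simp_all add: t_def)
  have cases: "i = c \<or> i = j \<or> i = k" if "i \<in> {1, 2, 3}" for i
    using that idx by blast
  have "t 1 + t 2 + t 3 = (\<Sum>i\<in>{c, j, k}. t i)" by (simp add: idx)
  also have "\<dots> = 0" using dist by (simp add: t)
  finally have sum: "t 1 + t 2 + t 3 = 0" .
  have "of_int (p c) * t c = - (of_int (p c) / of_int r + of_int (p c) / of_int s :: real)"
    by (simp add: t algebra_simps)
  then have "of_int (p c) * t c \<in> \<int>" using r_dvd s_dvd by (simp add: of_int_divide_in_Ints)
  moreover have "of_int (p j) * t j \<in> \<int>" "of_int (p k) * t k \<in> \<int>"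
    using r_dvd s_dvd by (simp_all add: t of_int_divide_in_Ints)
  ultimately have order: "of_int (p i) * t i \<in> \<int>" if "i \<in> {1, 2, 3}" for i
    using cases[OF that] by blast
  have "2 * t c = - (2 / of_int r + 2 / of_int s)" by (simp add: t)
  then have "2 * t c \<notin> \<int>"
    using two_div_add_two_div_not_Ints[OF r(1) s(1) r(2) s(2)] by (metis Ints_minus minus_minus)
  moreover have "2 * t j \<notin> \<int>" "2 * t k \<notin> \<int>"
    using two_div_not_Ints[OF r(2)] two_div_not_Ints[OF s(2)] by (simp_all add: t)
  ultimately have nonscalar: "2 * t i \<notin> \<int>" if "i \<in> {1, 2, 3}" for i
    using cases[OF that] by blast
  from sum order nonscalar show ?thesis by (rule exceptional_abelian_chars_nonempty_if_angles)
qed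

lemma exceptional_abelian_chars_nonempty_if_not_weakly_coprime:
  assumes pos: "\<forall>i\<in>{1, 2, 3}. p i \<ge> 1"
    and parity: "card {i \<in> {1, 2, 3 :: nat}. even (p i)} \<le> 1"
    and "\<not> weakly_coprime p"
  shows "exceptional_abelian_chars p q \<noteq> {}"
proof -
  obtain c j k where idx: "{c, j, k} = {1, 2, 3 :: nat}"
    and ncop: "\<not> coprime (p c) (p j)" "\<not> coprime (p c) (p k)"
    using assms(3) by (rule not_weakly_coprimeE)
  have cjk: "c \<in> {1, 2, 3}" "j \<in> {1, 2, 3}" "k \<in> {1, 2, 3}" using idx by blast+
  note dist = distinct_if_insert3_eq_123[OF idx]
  have "odd (p c) \<or> odd (p j)" "odd (p c) \<or> odd (p k)"
    using odd_if_card_even_le_1[OF parity cjk(1,2) dist(1)]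
      odd_if_card_even_le_1[OF parity cjk(1,3) dist(2)] .
  with pos idx ncop show ?thesis by (rule exceptional_abelian_chars_nonempty_if_not_coprime)
qed

lemma x_M_eq_0_iff:
  "\<forall>i\<in>{1, 2, 3}. p i \<ge> 1 \<Longrightarrow> x_M p q = 0 \<longleftrightarrow> exceptional_abelian_chars p q = {}"
  by (simp add: x_M_def finite_exceptional_abelian_chars)

theorem corollary5p7:
  fixes p q :: "nat \<Rightarrow> int"
  assumes "\<forall>i\<in>{1,2,3}. p i \<ge> 1 \<and> coprime (p i) (q i)"
    and "euler_number p q \<noteq> 0"
    and "card {i\<in>{1,2,3::nat}. even (p i)} \<le> 1"
  shows "x_M p q = 0 \<longleftrightarrow> weakly_coprime p"
proof -
  have pos: "\<forall>i\<in>{1, 2, 3}. p i \<ge> 1" using assms(1) by blast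
  have "exceptional_abelian_chars p q = {} \<longleftrightarrow> weakly_coprime p"
    using exceptional_abelian_chars_empty_if_weakly_coprime[OF pos]
      exceptional_abelian_chars_nonempty_if_not_weakly_coprime[OF pos assms(3)] by blast
  with x_M_eq_0_iff[OF pos] show ?thesis by simp
qed

end
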